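(* Let $0<\epsilon<1$, $\epsilon_3=\frac{\epsilon}{2|V(H)|}$ and $\epsilon_4=\frac{\epsilon_3}{4k-2}$. For $u,v\in V(H)$, if the shortest path $\pi_{G-D}(u,v)$ is $\epsilon_3$-far away from $V(H)$, then it is an $\epsilon_4$-segment expath.
   Context: $G=(V,E)$ is an undirected graph with $n\ge3$ vertices and real edge weights in $[1,W]$; shortest paths in every subgraph are assumed unique; $\pi_{G'}(x,y)$ is the shortest $x$-$y$ path in $G'$, $\delta_{G'}$ its length, $|P|$ the weighted length of a path $P$, $P[a,b]$ the subpath between $a,b$, and $G-R$ the graph with vertex set $R$ deleted. Let $k=\ln n$. For $R\subseteq V$, $S\subseteq V\setminus R$, an $S$-restricted tree cover of $G-R$ is a family $\{T(w):w\in S\}$ of trees, $T(w)$ a subtree of $G-R$ rooted at $w$, such that (i) for all $u\in S$, $v\in V\setminus R$ there is $w\in S$ with $u,v\in V(T(w))$ and $\mathrm{dep}_{T(w)}(u)+\mathrm{dep}_{T(w)}(v)\le(2k-1)\delta_{G-R}(u,v)$ ($\mathrm{dep}_T(x)$ = weighted distance from $x$ to the root); (ii) each vertex lies in at most $kn^{1/k}(\ln n+1)$ trees. A vertex of such a tree $T$ is a trunk vertex if it lies on the $T$-path between two vertices of $S$; $\mathrm{Trunk}(T)$ is the subtree induced by trunk vertices; $\mathrm{pdeg}_T(v)$ is the degree of $v$ in $\mathrm{Trunk}(T)$ (0 if not trunk). Fix an integer $d\ge2$, a constant $c\ge1$, $s=4e d^{c+1}\ln^2 n+1$; $\mathrm{Hi}(\mathcal{C})$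 is the set of vertices of pseudo-degree $>s$ in some tree of a tree cover $\mathcal{C}$. Fixed tree covers: $\mathcal{T}(S)$ ($S$-restricted, of $G$) and $\mathcal{T}_R(S)$ ($(S\setminus R)$-restricted, of $G-R$), $\mathcal{T}_\varnothing(S)=\mathcal{T}(S)$. Hierarchy tree: root $V$; a node $U$ is a leaf if $\mathrm{Hi}(\mathcal{T}(U))=\varnothing$, else it has children $W_1=\mathrm{Hi}(\mathcal{T}(U))$, $W_i=W_{i-1}\cup\mathrm{Hi}(\mathcal{T}_{W_{i-1}}(U))$ ($2\le i\le d$), recursively. Let $D\subseteq V$, $|D|\le d$, and fix a root-to-node path $V=U_1,\dots,U_p$ in the hierarchy tree, $U_{p+1}=\varnothing$, such that every $f\in D$ has pseudo-degree $\le s$ in every tree of $\mathcal{T}:=\bigcup_{i=1}^p\mathcal{T}_{U_{i+1}}(U_i)$. The level $l(v)$ is the largest $l$ with $v\in U_l$; $G_i$ is the subgraph of $G$ induced by the vertices of level $\le i$. Let $s_0,t_0\in V\setminus D$ be query vertices; for $f\in D$, $T\in\mathcal{T}$ containing $f$, $N_T(f)=\{\mathrm{parent}_T(f)\}\cup(\mathrm{children}_T(f)\cap\mathrm{Trunk}(T))$, $N(f)=\bigcup_T N_T(f)$, and $V(H)=(\{s_0,t_0\}\cup\bigcup_{f\in D}N(f))\setminus D$. A path $P$ from $a$ to $b$ is $\eta$-far away from $V(H)$ if there are no $x\in P\setminus\{a,b\}$, $w\in V(H)$ with $\delta_{G-D}(x,w)\le\eta\cdot\min\{|P[a,x]|,|P[x,b]|\}$.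 $\eta$-segments: for $P=(a=v_0,\dots,v_\ell=b)$ and $1\le i,j<\ell$, $v_i,v_j$ are in the same $\eta$-segment if either both $|P[a,v_i]|,|P[a,v_j]|\le|P|/2$ and $\lfloor\log_{1+\eta}|P[a,v_i]|\rfloor=\lfloor\log_{1+\eta}|P[a,v_j]|\rfloor$, or both $|P[v_i,b]|,|P[v_j,b]|<|P|/2$ and $\lfloor\log_{1+\eta}|P[v_i,b]|\rfloor=\lfloor\log_{1+\eta}|P[v_j,b]|\rfloor$; the classes are contiguous subpaths, and $a,b$ are in no segment. A path $P$ is an $\eta$-segment expath if for every $\eta$-segment $P[x,y]$ of $P$ there is $1\le i\le p$ such that $P[x,y]$ is a shortest path in $G_i$. *)

theory Defs
  imports Complex_Main "HOL-Library.Extended_Real"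
begin

text \<open>A (sub)graph is given by a vertex set X and a set F of undirected edges
(two-element vertex sets). Edge weights are given by wt.\<close>

definition is_walk :: "'a set \<Rightarrow> 'a set set \<Rightarrow> 'a list \<Rightarrow> 'a \<Rightarrow> 'a \<Rightarrow> bool" where
  "is_walk X F q a b \<longleftrightarrow> q \<noteq> [] \<and> hd q = a \<and> last q = b \<and> set q \<subseteq> X \<and>
     (\<forall>i. Suc i < length q \<longrightarrow> {q!i, q!Suc i} \<in> F)"

definition plen :: "('a set \<Rightarrow> real) \<Rightarrow> 'a list \<Rightarrow> real" where
  "plen wt q = (\<Sum>i<length q - 1. wt {q!i, q!Suc i})"

definition gdist :: "'a set \<Rightarrow> 'a set set \<Rightarrow> ('a set \<Rightarrow> real) \<Rightarrow> 'a \<Rightarrow> 'a \<Rightarrow> ereal" where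
  "gdist X F wt a b = (INF q\<in>{q. is_walk X F q a b}. ereal (plen wt q))"

definition is_shortest :: "'a set \<Rightarrow> 'a set set \<Rightarrow> ('a set \<Rightarrow> real) \<Rightarrow> 'a list \<Rightarrow> 'a \<Rightarrow> 'a \<Rightarrow> bool" where
  "is_shortest X F wt q a b \<longleftrightarrow> is_walk X F q a b \<and> ereal (plen wt q) = gdist X F wt a b"

text \<open>Edge set of the subgraph of (V,E) induced by X (e.g. G - R is induced by V - R).\<close>
definition ind :: "'a set set \<Rightarrow> 'a set \<Rightarrow> 'a set set" where
  "ind E X = {e\<in>E. e \<subseteq> X}"

definition weighted_graph :: "'a set \<Rightarrow> 'a set set \<Rightarrow> ('a set \<Rightarrow> real) \<Rightarrow> real \<Rightarrow> bool" where
  "weighted_graph V E wt W \<longleftrightarrow> finite V \<and> card V \<ge> 3 \<and>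
     E \<subseteq> {{x,y} | x y. x \<in> V \<and> y \<in> V \<and> x \<noteq> y} \<and> (\<forall>e\<in>E. 1 \<le> wt e \<and> wt e \<le> W)"

definition unique_shortest :: "'a set \<Rightarrow> 'a set set \<Rightarrow> ('a set \<Rightarrow> real) \<Rightarrow> bool" where
  "unique_shortest V E wt \<longleftrightarrow> (\<forall>X F a b q q'. X \<subseteq> V \<longrightarrow> F \<subseteq> ind E X \<longrightarrow>
      is_shortest X F wt q a b \<longrightarrow> is_shortest X F wt q' a b \<longrightarrow> q = q')"

type_synonym 'a tree = "'a set \<times> 'a set set"

definition is_tree_in :: "'a set \<Rightarrow> 'a set set \<Rightarrow> 'a tree \<Rightarrow> bool" where
  "is_tree_in X F T \<longleftrightarrow> fst T \<subseteq> X \<and> snd T \<subseteq> F \<and> (\<forall>e\<in>snd T. e \<subseteq> fst T) \<and>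
     (\<forall>a\<in>fst T. \<forall>b\<in>fst T. \<exists>q. is_walk (fst T) (snd T) q a b) \<and>
     \<not> (\<exists>cy. length cy \<ge> 3 \<and> distinct cy \<and> is_walk (fst T) (snd T) cy (hd cy) (last cy)
            \<and> {last cy, hd cy} \<in> snd T)"

definition dep :: "('a set \<Rightarrow> real) \<Rightarrow> 'a tree \<Rightarrow> 'a \<Rightarrow> 'a \<Rightarrow> ereal" where
  "dep wt T r x = gdist (fst T) (snd T) wt x r"

definition trunk :: "'a set \<Rightarrow> 'a tree \<Rightarrow> 'a set" where
  "trunk S T = {x. \<exists>a\<in>S \<inter> fst T. \<exists>b\<in>S \<inter> fst T. \<exists>q. is_walk (fst T) (snd T) q a b \<and> distinct q \<and> x \<in> set q}"

definition pdeg :: "'a set \<Rightarrow> 'a tree \<Rightarrow> 'a \<Rightarrow> nat" where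
  "pdeg S T v = (if v \<in> trunk S T then card {y\<in>trunk S T. {v,y} \<in> snd T} else 0)"

definition parents :: "'a tree \<Rightarrow> 'a \<Rightarrow> 'a \<Rightarrow> 'a set" where
  "parents T r f = {y. \<exists>q. is_walk (fst T) (snd T) q f r \<and> distinct q \<and> length q \<ge> 2 \<and> q!1 = y}"

definition children :: "'a tree \<Rightarrow> 'a \<Rightarrow> 'a \<Rightarrow> 'a set" where
  "children T r f = {y. {f,y} \<in> snd T \<and> y \<notin> parents T r f}"

text \<open>C is an S-restricted tree cover of G - R (C x is the tree T(x), rooted at x, for x in S).
  k = ln n.\<close>
definition tree_cover :: "'a set \<Rightarrow> 'a set set \<Rightarrow> ('a set \<Rightarrow> real) \<Rightarrow> 'a set \<Rightarrow> 'a set \<Rightarrow> ('a \<Rightarrow> 'a tree) \<Rightarrow> bool" where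
  "tree_cover V E wt R S C \<longleftrightarrow>
     (let n = real (card V); k = ln n in
      S \<subseteq> V - R \<and>
      (\<forall>x\<in>S. is_tree_in (V - R) (ind E (V - R)) (C x) \<and> x \<in> fst (C x)) \<and>
      (\<forall>u\<in>S. \<forall>v\<in>V - R. gdist (V - R) (ind E (V - R)) wt u v < \<infinity> \<longrightarrow>
          (\<exists>x\<in>S. u \<in> fst (C x) \<and> v \<in> fst (C x) \<and>
             dep wt (C x) x u + dep wt (C x) x v \<le> ereal (2*k - 1) * gdist (V - R) (ind E (V - R)) wt u v)) \<and>
      (\<forall>y\<in>V. real (card {x\<in>S. y \<in> fst (C x)}) \<le> k * n powr (1/k) * (ln n + 1)))"

text \<open>TC R S is the fixed (S - R)-restricted tree cover T_R(S) of G - R; T(S) = TC {} S.\<close>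
definition Hi :: "real \<Rightarrow> ('a set \<Rightarrow> 'a set \<Rightarrow> 'a \<Rightarrow> 'a tree) \<Rightarrow> 'a set \<Rightarrow> 'a set \<Rightarrow> 'a set" where
  "Hi s TC R S = {v. \<exists>x\<in>S - R. real (pdeg (S - R) (TC R S x) v) > s}"

text \<open>Wc s TC U i is the child W_(i+1) of U.\<close>
primrec Wc :: "real \<Rightarrow> ('a set \<Rightarrow> 'a set \<Rightarrow> 'a \<Rightarrow> 'a tree) \<Rightarrow> 'a set \<Rightarrow> nat \<Rightarrow> 'a set" where
  "Wc s TC U 0 = Hi s TC {} U"
| "Wc s TC U (Suc i) = Wc s TC U i \<union> Hi s TC (Wc s TC U i) U"

text \<open>U 1, ..., U p is a root-to-node path of the hierarchy tree (with root V).\<close>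
definition hier_path :: "real \<Rightarrow> nat \<Rightarrow> ('a set \<Rightarrow> 'a set \<Rightarrow> 'a \<Rightarrow> 'a tree) \<Rightarrow> 'a set \<Rightarrow> (nat \<Rightarrow> 'a set) \<Rightarrow> nat \<Rightarrow> bool" where
  "hier_path s d TC V U p \<longleftrightarrow> p \<ge> 1 \<and> U 1 = V \<and>
     (\<forall>j. 1 \<le> j \<and> j < p \<longrightarrow> Hi s TC {} (U j) \<noteq> {} \<and> (\<exists>i<d. U (Suc j) = Wc s TC (U j) i))"

text \<open>Index set of the trees of the union cover: tree (i,x) is TC (U (i+1)) (U i) x,
  restricted to U i - U (i+1), rooted at x.\<close>
definition tidx :: "(nat \<Rightarrow> 'a set) \<Rightarrow> nat \<Rightarrow> (nat \<times> 'a) set" where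
  "tidx U p = {(i,x). 1 \<le> i \<and> i \<le> p \<and> x \<in> U i - U (Suc i)}"

definition lev :: "(nat \<Rightarrow> 'a set) \<Rightarrow> nat \<Rightarrow> 'a \<Rightarrow> nat" where
  "lev U p v = Max {l. 1 \<le> l \<and> l \<le> p \<and> v \<in> U l}"

definition Gv :: "'a set \<Rightarrow> (nat \<Rightarrow> 'a set) \<Rightarrow> nat \<Rightarrow> nat \<Rightarrow> 'a set" where
  "Gv V U p i = {v\<in>V. lev U p v \<le> i}"

definition NT :: "('a set \<Rightarrow> 'a set \<Rightarrow> 'a \<Rightarrow> 'a tree) \<Rightarrow> (nat \<Rightarrow> 'a set) \<Rightarrow> nat \<times> 'a \<Rightarrow> 'a \<Rightarrow> 'a set" where
  "NT TC U ix f = (let i = fst ix; x = snd ix; T = TC (U (Suc i)) (U i) x in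
      parents T x f \<union> (children T x f \<inter> trunk (U i - U (Suc i)) T))"

definition VH :: "('a set \<Rightarrow> 'a set \<Rightarrow> 'a \<Rightarrow> 'a tree) \<Rightarrow> (nat \<Rightarrow> 'a set) \<Rightarrow> nat \<Rightarrow> 'a set \<Rightarrow> 'a \<Rightarrow> 'a \<Rightarrow> 'a set" where
  "VH TC U p D s0 t0 = ({s0, t0} \<union>
     (\<Union>f\<in>D. \<Union>ix\<in>{ix\<in>tidx U p. f \<in> fst (TC (U (Suc (fst ix))) (U (fst ix)) (snd ix))}. NT TC U ix f)) - D"

definition far_away :: "'a set \<Rightarrow> 'a set set \<Rightarrow> ('a set \<Rightarrow> real) \<Rightarrow> 'a set \<Rightarrow> real \<Rightarrow> 'a list \<Rightarrow> bool" where
  "far_away X F wt H \<eta> P \<longleftrightarrow> (\<forall>i. 0 < i \<and> i < length P - 1 \<longrightarrow> (\<forall>y\<in>H.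
      \<not> (gdist X F wt (P!i) y \<le> ereal (\<eta> * min (plen wt (take (Suc i) P)) (plen wt (drop i P))))))"

definition same_seg :: "('a set \<Rightarrow> real) \<Rightarrow> real \<Rightarrow> 'a list \<Rightarrow> nat \<Rightarrow> nat \<Rightarrow> bool" where
  "same_seg wt \<eta> P i j \<longleftrightarrow>
     (let L = plen wt P; pre = (\<lambda>m. plen wt (take (Suc m) P)); suf = (\<lambda>m. plen wt (drop m P)) in
      (pre i \<le> L/2 \<and> pre j \<le> L/2 \<and> \<lfloor>log (1+\<eta>) (pre i)\<rfloor> = \<lfloor>log (1+\<eta>) (pre j)\<rfloor>) \<or>
      (suf i < L/2 \<and> suf j < L/2 \<and> \<lfloor>log (1+\<eta>) (suf i)\<rfloor> = \<lfloor>log (1+\<eta>) (suf j)\<rfloor>))"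

definition seg_class :: "('a set \<Rightarrow> real) \<Rightarrow> real \<Rightarrow> 'a list \<Rightarrow> nat \<Rightarrow> nat set" where
  "seg_class wt \<eta> P i = {j. 1 \<le> j \<and> j < length P - 1 \<and> same_seg wt \<eta> P i j}"

definition subpath :: "'a list \<Rightarrow> nat \<Rightarrow> nat \<Rightarrow> 'a list" where
  "subpath P a b = take (Suc b - a) (drop a P)"

definition seg_expath :: "'a set \<Rightarrow> 'a set set \<Rightarrow> ('a set \<Rightarrow> real) \<Rightarrow> (nat \<Rightarrow> 'a set) \<Rightarrow> nat \<Rightarrow> real \<Rightarrow> 'a list \<Rightarrow> bool" where
  "seg_expath V E wt U p \<eta> P \<longleftrightarrow> (\<forall>i. 1 \<le> i \<and> i < length P - 1 \<longrightarrow>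
     (let C = seg_class wt \<eta> P i; a = Min C; b = Max C in
      \<exists>l. 1 \<le> l \<and> l \<le> p \<and>
        is_shortest (Gv V U p l) (ind E (Gv V U p l)) wt (subpath P a b) (P!a) (P!b)))"

end

theory Submission
  imports Defs
begin

(* Let P[a,b] be an eps4-segment of P and v_z a vertex of it of maximal level l, so that
   P[a,b] lies in G_l. A walk of G_l between the ends of the segment that avoids D is no
   shorter than P[a,b], because P is shortest in G - D. A shorter walk through some f in D
   gives a walk from v_z to f in G - U_(l+1) of length below 2|P[a,b]|; as v_z lies in
   U_l - U_(l+1), some tree T(w) of the cover of G - U_(l+1) contains v_z and f with
   dep(v_z) + dep(f) < (4k - 2)|P[a,b]|. Following the tree path from v_z to w, and if it
   avoids D the tree path from w down to f, one stops at a tree neighbour of a vertex of D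
   (a parent, or a trunk child) before entering D; that vertex is in V(H). Since the segment
   is short compared with its distance to the ends of P,
   |P[a,b]| < eps4 * min(|P[a,v_z]|, |P[v_z,b]|), this puts a vertex of V(H) within
   eps3 * min(|P[a,v_z]|, |P[v_z,b]|) of v_z in G - D, contradicting farness. *)

section \<open>Walks and their lengths\<close>

abbreviation prefix_len :: "('a set \<Rightarrow> real) \<Rightarrow> 'a list \<Rightarrow> nat \<Rightarrow> real" where
  "prefix_len wt P m \<equiv> plen wt (take (Suc m) P)"

abbreviation suffix_len :: "('a set \<Rightarrow> real) \<Rightarrow> 'a list \<Rightarrow> nat \<Rightarrow> real" where
  "suffix_len wt P m \<equiv> plen wt (drop m P)"

lemma plen_Nil [simp]: "plen wt [] = 0"
  by (simp add: plen_def)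

lemma plen_singleton [simp]: "plen wt [x] = 0"
  by (simp add: plen_def)

lemma plen_Cons_Cons [simp]: "plen wt (x # y # ys) = wt {x, y} + plen wt (y # ys)"
  unfolding plen_def by (simp add: sum.lessThan_Suc_shift del: sum.lessThan_Suc)

lemma is_walk_singleton [simp]: "is_walk X F [x] a b \<longleftrightarrow> x = a \<and> x = b \<and> x \<in> X"
  unfolding is_walk_def by auto

lemma is_walk_Cons_Cons [simp]:
  "is_walk X F (x # y # ys) a b \<longleftrightarrow> x = a \<and> x \<in> X \<and> {x, y} \<in> F \<and> is_walk X F (y # ys) y b"
proof -
  have "(\<forall>i. Suc i < length (x # y # ys) \<longrightarrow> {(x # y # ys) ! i, (x # y # ys) ! Suc i} \<in> F) \<longleftrightarrow>
        {x, y} \<in> F \<and> (\<forall>i. Suc i < length (y # ys) \<longrightarrow> {(y # ys) ! i, (y # ys) ! Suc i} \<in> F)"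
    by (auto simp: less_Suc_eq_0_disj)
  then show ?thesis
    unfolding is_walk_def by auto
qed

lemma is_walk_ConsD: "is_walk X F (x # xs) a b \<Longrightarrow> x = a \<and> x \<in> X"
  unfolding is_walk_def by auto

lemma is_walk_endpoints: "is_walk X F q a b \<Longrightarrow> q \<noteq> [] \<and> hd q = a \<and> last q = b \<and> set q \<subseteq> X"
  unfolding is_walk_def by simp

lemma is_walk_endpoints_mem: "is_walk X F q a b \<Longrightarrow> a \<in> X \<and> b \<in> X"
  using is_walk_endpoints[of X F q a b] hd_in_set last_in_set by fastforce

lemma is_walk_append_Cons_iff:
  "is_walk X F (xs @ y # ys) a b \<longleftrightarrow> is_walk X F (xs @ [y]) a y \<and> is_walk X F (y # ys) y b"
proof (induction xs arbitrary: a)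
  case Nil
  show ?case
    using is_walk_ConsD[of X F y ys a b] by auto
next
  case (Cons x xs)
  show ?case
  proof (cases xs)
    case Nil
    then show ?thesis
      using is_walk_ConsD[of X F y ys y b] by auto
  next
    case (Cons x' xs')
    then show ?thesis
      using Cons.IH[of x'] by auto
  qed
qed

lemma plen_append_Cons: "plen wt (xs @ y # ys) = plen wt (xs @ [y]) + plen wt (y # ys)"
proof (induction xs)
  case (Cons x xs)
  then show ?case by (cases xs) auto
qed simp

lemma is_walk_append_tl:
  assumes "is_walk X F xs a b" "is_walk X F ys b c"
  shows "is_walk X F (xs @ tl ys) a c" "plen wt (xs @ tl ys) = plen wt xs + plen wt ys"
proof -
  obtain zs where xs: "xs = zs @ [b]"
    using is_walk_endpoints[OF assms(1)] by (metis append_butlast_last_id)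
  obtain r where ys: "ys = b # r"
    using is_walk_endpoints[OF assms(2)] by (metis list.collapse)
  show "is_walk X F (xs @ tl ys) a c" "plen wt (xs @ tl ys) = plen wt xs + plen wt ys"
    using assms is_walk_append_Cons_iff[of X F zs b r a c] plen_append_Cons[of wt zs b r]
    by (simp_all add: xs ys)
qed

lemma plen_rev [simp]: "plen wt (rev q) = plen wt q"
proof (induction q rule: induct_list012)
  case (3 x y r)
  have "plen wt (rev (x # y # r)) = plen wt (rev (y # r)) + plen wt [y, x]"
    using plen_append_Cons[of wt "rev r" y "[x]"] by simp
  with 3 show ?case
    by (simp add: insert_commute)
qed simp_all

lemma is_walk_rev: "is_walk X F q a b \<Longrightarrow> is_walk X F (rev q) b a"
proof (induction q arbitrary: a rule: induct_list012)
  case (3 x y r)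
  then have "is_walk X F (rev (y # r)) b y" "is_walk X F [y, x] y a"
    using is_walk_ConsD[of X F y r y b] by (auto simp: insert_commute)
  then show ?case
    using is_walk_append_Cons_iff[of X F "rev r" y "[x]" b a] by auto
qed (auto simp: is_walk_def)

lemma plen_take_drop: "j < length q \<Longrightarrow> plen wt q = prefix_len wt q j + suffix_len wt q j"
  using plen_append_Cons[of wt "take j q" "q ! j" "drop (Suc j) q"]
  by (simp add: id_take_nth_drop[symmetric] take_Suc_conv_app_nth Cons_nth_drop_Suc)

lemma is_walk_take_drop:
  assumes "is_walk X F q a b" "j < length q"
  shows "is_walk X F (take (Suc j) q) a (q ! j)" "is_walk X F (drop j q) (q ! j) b"
  using assms is_walk_append_Cons_iff[of X F "take j q" "q ! j" "drop (Suc j) q" a b]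
  by (simp_all add: id_take_nth_drop[symmetric] take_Suc_conv_app_nth Cons_nth_drop_Suc)

lemma plen_nonneg: "is_walk X F q a b \<Longrightarrow> \<forall>e\<in>F. 0 \<le> wt e \<Longrightarrow> 0 \<le> plen wt q"
proof (induction q arbitrary: a)
  case (Cons x q)
  then show ?case by (cases q) fastforce+
qed simp

lemma plen_ge_1:
  assumes "is_walk X F q a b" "\<forall>e\<in>F. 1 \<le> wt e" "2 \<le> length q"
  shows "1 \<le> plen wt q"
proof -
  from assms(3) obtain x y r where q: "q = x # y # r"
    by (cases q; cases "tl q") auto
  with assms have walk: "is_walk X F (y # r) y b" and "1 \<le> wt {x, y}"
    by auto
  have "\<forall>e\<in>F. 0 \<le> wt e"
    using assms(2) by (meson order_trans zero_le_one)
  with walk have "0 \<le> plen wt (y # r)"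
    by (rule plen_nonneg)
  with \<open>1 \<le> wt {x, y}\<close> show ?thesis
    by (simp add: q)
qed

lemma is_walk_mono: "is_walk X F q a b \<Longrightarrow> X \<subseteq> X' \<Longrightarrow> F \<subseteq> F' \<Longrightarrow> is_walk X' F' q a b"
  unfolding is_walk_def by blast

lemma is_walk_ind:
  assumes "is_walk X F q a b" "F \<subseteq> E" "set q \<subseteq> Y"
  shows "is_walk Y (ind E Y) q a b"
proof -
  have "{q ! i, q ! Suc i} \<in> ind E Y" if "Suc i < length q" for i
    using assms that nth_mem[of i q] nth_mem[of "Suc i" q] unfolding is_walk_def ind_def by auto
  then show ?thesis
    using assms unfolding is_walk_def by blast
qed

lemma is_walk_remove_cycles:
  assumes "is_walk X F q a b" "\<forall>e\<in>F. 0 \<le> wt e"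
  shows "\<exists>q'. is_walk X F q' a b \<and> distinct q' \<and> plen wt q' \<le> plen wt q"
  using assms(1)
proof (induction "length q" arbitrary: q rule: less_induct)
  case less
  show ?case
  proof (cases "distinct q")
    case False
    then obtain xs ys zs y where q: "q = xs @ [y] @ ys @ [y] @ zs"
      using not_distinct_decomp by blast
    then have "is_walk X F (xs @ [y]) a y" "is_walk X F ((y # ys) @ [y]) y y" "is_walk X F (y # zs) y b"
      using less.prems is_walk_append_Cons_iff[of X F xs y "ys @ y # zs" a b]
        is_walk_append_Cons_iff[of X F "y # ys" y zs y b] by auto
    then have shortcut: "is_walk X F (xs @ y # zs) a b" and shorter: "plen wt (xs @ y # zs) \<le> plen wt q"
      using is_walk_append_Cons_iff[of X F xs y zs a b] plen_nonneg[OF _ assms(2)]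
        plen_append_Cons[of wt xs y "ys @ y # zs"] plen_append_Cons[of wt "y # ys" y zs]
        plen_append_Cons[of wt xs y zs] q by fastforce+
    have "length (xs @ y # zs) < length q"
      using q by simp
    then obtain q' where "is_walk X F q' a b" "distinct q'" "plen wt q' \<le> plen wt (xs @ y # zs)"
      using less.hyps[OF _ shortcut] by blast
    with shorter show ?thesis
      by (intro exI[of _ q']) auto
  next
    case True
    with less.prems show ?thesis
      by (intro exI[of _ q]) auto
  qed
qed

section \<open>Distances and subpaths\<close>

lemma gdist_le_plen: "is_walk X F q a b \<Longrightarrow> gdist X F wt a b \<le> ereal (plen wt q)"
  unfolding gdist_def by (rule INF_lower) simp

lemma gdist_geI: "(\<And>q. is_walk X F q a b \<Longrightarrow> r \<le> plen wt q) \<Longrightarrow> ereal r \<le> gdist X F wt a b"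
  unfolding gdist_def by (rule INF_greatest) simp

lemma gdist_lessE:
  assumes "gdist X F wt a b < ereal r"
  obtains q where "is_walk X F q a b" "plen wt q < r"
  using assms unfolding gdist_def by (auto simp: INF_less_iff)

lemma gdist_nonneg:
  assumes "\<forall>e\<in>F. 0 \<le> wt e"
  shows "0 \<le> gdist X F wt a b"
proof -
  have "ereal 0 \<le> gdist X F wt a b"
    using plen_nonneg[OF _ assms] by (rule gdist_geI)
  then show ?thesis
    by (simp add: zero_ereal_def)
qed

lemma gdist_sum_lessE:
  assumes less: "gdist X F wt a c + gdist X F wt b c < ereal r" and wt: "\<forall>e\<in>F. 0 \<le> wt e"
  obtains Z Y where "is_walk X F Z a c" "distinct Z" "is_walk X F Y b c" "distinct Y"
    "plen wt Z + plen wt Y < r"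
proof -
  have nonneg: "0 \<le> gdist X F wt a c" "0 \<le> gdist X F wt b c"
    using gdist_nonneg[OF wt] by auto
  with less obtain da db where d: "gdist X F wt a c = ereal da" "gdist X F wt b c = ereal db"
    by (cases "gdist X F wt a c"; cases "gdist X F wt b c") auto
  define \<delta> where "\<delta> = (r - da - db) / 2"
  have "0 < \<delta>" and sum: "(da + \<delta>) + (db + \<delta>) = r"
    using less d unfolding \<delta>_def by simp_all
  then have "gdist X F wt a c < ereal (da + \<delta>)" "gdist X F wt b c < ereal (db + \<delta>)"
    using d by simp_all
  then obtain Z0 Y0 where Z0: "is_walk X F Z0 a c" "plen wt Z0 < da + \<delta>"
      and Y0: "is_walk X F Y0 b c" "plen wt Y0 < db + \<delta>"
    by (meson gdist_lessE)
  obtain Z Y where Z: "is_walk X F Z a c" "distinct Z" "plen wt Z \<le> plen wt Z0"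
      and Y: "is_walk X F Y b c" "distinct Y" "plen wt Y \<le> plen wt Y0"
    using is_walk_remove_cycles[OF Z0(1) wt] is_walk_remove_cycles[OF Y0(1) wt] by blast
  show ?thesis
  proof (rule that[OF Z(1,2) Y(1,2)])
    show "plen wt Z + plen wt Y < r"
      using Z(3) Y(3) Z0(2) Y0(2) sum by linarith
  qed
qed

lemma subpath_conv_map: "n < length P \<Longrightarrow> subpath P m n = map ((!) P) [m..<Suc n]"
  unfolding subpath_def by (intro nth_equalityI) (auto simp del: upt_Suc)

lemma set_subpath: "n < length P \<Longrightarrow> set (subpath P m n) = (!) P ` {m..n}"
  by (auto simp: subpath_conv_map)

lemma drop_subpath: "m \<le> n \<Longrightarrow> n < length P \<Longrightarrow> drop m (take (Suc n) P) = subpath P m n"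
  unfolding subpath_def by (simp add: drop_take)

lemma prefix_len_subpath:
  assumes "m \<le> n" "n < length P"
  shows "prefix_len wt P n = prefix_len wt P m + plen wt (subpath P m n)"
  using plen_take_drop[of m "take (Suc n) P" wt] assms by (simp add: min_def drop_subpath)

lemma suffix_len_subpath:
  assumes "m \<le> n" "n < length P"
  shows "suffix_len wt P m = plen wt (subpath P m n) + suffix_len wt P n"
  using plen_take_drop[of "n - m" "drop m P" wt] assms by (simp add: subpath_def Suc_diff_le)

lemma is_walk_subpath:
  assumes "is_walk X F P a b" "m \<le> n" "n < length P"
  shows "is_walk X F (subpath P m n) (P ! m) (P ! n)"
proof -
  have "is_walk X F (drop m P) (P ! m) b"
    using is_walk_take_drop(2)[OF assms(1)] assms by simp
  from is_walk_take_drop(1)[OF this, of "n - m"] show ?thesis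
    using assms by (simp add: subpath_def Suc_diff_le)
qed

lemma is_shortest_subpath_le:
  assumes P: "is_shortest X F wt P u v" and ab: "a \<le> b" "b < length P"
    and q: "is_walk X F q (P ! a) (P ! b)"
  shows "plen wt (subpath P a b) \<le> plen wt q"
proof -
  have P_walk: "is_walk X F P u v"
    using P unfolding is_shortest_def by simp
  have "is_walk X F (take (Suc a) P @ tl q) u (P ! b)"
    and len_prefix_q: "plen wt (take (Suc a) P @ tl q) = prefix_len wt P a + plen wt q"
    using is_walk_append_tl[OF is_walk_take_drop(1)[OF P_walk] q] ab by auto
  note detour = is_walk_append_tl[OF this(1) is_walk_take_drop(2)[OF P_walk ab(2)]]
  have "ereal (plen wt P) \<le> ereal (plen wt ((take (Suc a) P @ tl q) @ tl (drop b P)))"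
    using P gdist_le_plen[OF detour(1)] unfolding is_shortest_def by simp
  then show ?thesis
    using detour(2)[of wt] len_prefix_q plen_take_drop[of a P wt] suffix_len_subpath[OF ab, of wt] ab
    by simp
qed

section \<open>Segments\<close>

lemma same_floor_log_diff_less:
  fixes \<beta> x y :: real
  assumes "1 < \<beta>" "0 < x" "x \<le> y" "\<lfloor>log \<beta> x\<rfloor> = \<lfloor>log \<beta> y\<rfloor>"
  shows "y - x < (\<beta> - 1) * x"
proof -
  define m where "m = \<lfloor>log \<beta> x\<rfloor>"
  have "\<beta> powr m \<le> x" "y < \<beta> powr (m + 1)"
    using floor_log_eq_powr_iff[of x \<beta> m] floor_log_eq_powr_iff[of y \<beta> m] assms
    unfolding m_def by auto
  moreover have "\<beta> powr (m + 1) = \<beta> * \<beta> powr m"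
    using assms(1) by (simp add: powr_add)
  ultimately have "y < \<beta> * x"
    using assms(1) by (smt (verit) mult_left_mono)
  then show ?thesis
    by (simp add: algebra_simps)
qed

lemma same_seg_refl: "i < length P \<Longrightarrow> same_seg wt \<eta> P i i"
  using plen_take_drop[of i P wt] unfolding same_seg_def Let_def by linarith

lemma same_seg_trans:
  assumes "i < length P" "same_seg wt \<eta> P i a" "same_seg wt \<eta> P i b"
  shows "same_seg wt \<eta> P a b"
proof -
  have "\<not> (prefix_len wt P i \<le> plen wt P / 2 \<and> suffix_len wt P i < plen wt P / 2)"
    using plen_take_drop[OF assms(1), of wt] by linarith
  with assms(2,3) show ?thesis
    unfolding same_seg_def Let_def by auto
qed

lemma seg_class_bounds:
  assumes "1 \<le> i" "i < length P - 1"
  shows "1 \<le> Min (seg_class wt \<eta> P i)" "Min (seg_class wt \<eta> P i) \<le> Max (seg_class wt \<eta> P i)"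
    "Max (seg_class wt \<eta> P i) < length P - 1"
    "same_seg wt \<eta> P (Min (seg_class wt \<eta> P i)) (Max (seg_class wt \<eta> P i))"
proof -
  let ?C = "seg_class wt \<eta> P i"
  have fin: "finite ?C"
    unfolding seg_class_def by simp
  have "i \<in> ?C"
    using assms same_seg_refl[of i P wt \<eta>] unfolding seg_class_def by simp
  then have mem: "Min ?C \<in> ?C" "Max ?C \<in> ?C" and "Min ?C \<le> Max ?C"
    using fin by (auto intro: Min_in Max_in Min_le_iff[THEN iffD2])
  then show "1 \<le> Min ?C" "Min ?C \<le> Max ?C" "Max ?C < length P - 1"
    unfolding seg_class_def by auto
  have "same_seg wt \<eta> P i (Min ?C)" "same_seg wt \<eta> P i (Max ?C)"
    using mem unfolding seg_class_def by simp_all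
  then show "same_seg wt \<eta> P (Min ?C) (Max ?C)"
    using same_seg_trans[of i P wt \<eta>] assms(2) by simp
qed

lemma subpath_len_less_same_seg:
  assumes P: "is_walk X F P x y" and wt: "\<forall>e\<in>F. 1 \<le> wt e" and \<eta>: "0 < \<eta>"
    and abz: "1 \<le> a" "a \<le> z" "z \<le> b" "b < length P - 1"
    and seg: "same_seg wt \<eta> P a b"
  shows "plen wt (subpath P a b) < \<eta> * min (prefix_len wt P z) (suffix_len wt P z)"
proof -
  let ?pre = "prefix_len wt P" and ?suf = "suffix_len wt P" and ?L = "plen wt P"
  have wt0: "\<forall>e\<in>F. 0 \<le> wt e"
    using wt by (meson order_trans zero_le_one)
  have sub_nonneg: "0 \<le> plen wt (subpath P m n)" if "m \<le> n" "n < length P" for m n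
    using plen_nonneg[OF is_walk_subpath[OF P that] wt0] .
  have z: "z < length P"
    using abz by linarith
  have "a < length P" "b < length P" "2 \<le> length P - b"
    using abz by linarith+
  then have pre_a: "0 < ?pre a" and suf_b: "0 < ?suf b"
    using plen_ge_1[OF is_walk_take_drop(1)[OF P] wt, of a]
      plen_ge_1[OF is_walk_take_drop(2)[OF P] wt, of b] abz by simp_all
  have split: "?pre m + ?suf m = ?L" if "m < length P" for m
    using plen_take_drop[OF that] by simp
  have mono: "?pre a \<le> ?pre z" "?pre z \<le> ?pre b" "?suf b \<le> ?suf z" "?suf z \<le> ?suf a"
    using prefix_len_subpath[of a z P wt] prefix_len_subpath[of z b P wt]
      suffix_len_subpath[of a z P wt] suffix_len_subpath[of z b P wt]
      sub_nonneg[of a z] sub_nonneg[of z b] abz by auto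
  have sub: "plen wt (subpath P a b) = ?pre b - ?pre a" "plen wt (subpath P a b) = ?suf a - ?suf b"
    using prefix_len_subpath[of a b P wt] suffix_len_subpath[of a b P wt] abz by auto
  from seg show ?thesis
    unfolding same_seg_def Let_def
  proof (elim disjE conjE)
    assume "?pre a \<le> ?L / 2" "?pre b \<le> ?L / 2" "\<lfloor>log (1 + \<eta>) (?pre a)\<rfloor> = \<lfloor>log (1 + \<eta>) (?pre b)\<rfloor>"
    with same_floor_log_diff_less[of "1 + \<eta>" "?pre a" "?pre b"] \<eta> pre_a mono
    have "?pre b - ?pre a < \<eta> * ?pre z"
      by (smt (verit) mult_left_mono)
    moreover have "?pre z \<le> ?suf z"
      using split[OF z] mono \<open>?pre b \<le> ?L / 2\<close> by simp
    ultimately show ?thesis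
      using sub by (simp add: min_def)
  next
    assume "?suf a < ?L / 2" "?suf b < ?L / 2" "\<lfloor>log (1 + \<eta>) (?suf a)\<rfloor> = \<lfloor>log (1 + \<eta>) (?suf b)\<rfloor>"
    with same_floor_log_diff_less[of "1 + \<eta>" "?suf b" "?suf a"] \<eta> suf_b mono
    have "?suf a - ?suf b < \<eta> * ?suf z"
      by (smt (verit) mult_left_mono)
    moreover have "?suf z \<le> ?pre z"
      using split[OF z] mono \<open>?suf a < ?L / 2\<close> by simp
    ultimately show ?thesis
      using sub by (simp add: min_def)
  qed
qed

section \<open>Walks in trees\<close>

lemma trunk_subset: "trunk S T \<subseteq> fst T"
  unfolding trunk_def using is_walk_endpoints by fastforce

lemma first_D_vertex_on_trunk_walk:
  assumes Z: "is_walk (fst T) (snd T) Z x r" "distinct Z" and "x \<in> S" "r \<in> S"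
    and "x \<notin> D" "set Z \<inter> D \<noteq> {}" and wt: "\<forall>e\<in>snd T. 0 \<le> wt e"
  obtains f g Q where "f \<in> D \<inter> fst T" "g \<notin> D" "g \<in> parents T r f \<union> (children T r f \<inter> trunk S T)"
    "is_walk (fst T) (snd T) Q x g" "set Q \<inter> D = {}" "plen wt Q \<le> plen wt Z"
proof -
  have "\<exists>y\<in>set Z. y \<in> D"
    using assms(6) by blast
  then obtain ys f zs where Z_split: "Z = ys @ f # zs" and f: "f \<in> D" and ys: "\<forall>y\<in>set ys. y \<notin> D"
    by (rule split_list_first_propE)
  have "hd Z = x"
    using is_walk_endpoints[OF Z(1)] by simp
  then have "ys \<noteq> []"
    using Z_split \<open>x \<notin> D\<close> f by auto
  then obtain ys' g where "ys = ys' @ [g]"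
    by (metis append_butlast_last_id)
  with Z_split ys have Z_split': "Z = ys' @ g # f # zs" and Q_free: "set (ys' @ [g]) \<inter> D = {}"
    by auto
  have Q: "is_walk (fst T) (snd T) (ys' @ [g]) x g" and tail: "is_walk (fst T) (snd T) (g # f # zs) g r"
    using Z(1) is_walk_append_Cons_iff[of "fst T" "snd T" ys' g "f # zs" x r] unfolding Z_split' by simp_all
  have edge: "{f, g} \<in> snd T"
    using tail by (simp add: insert_commute)
  have "f \<in> fst T"
    using is_walk_endpoints[OF tail] by simp
  have "g \<in> set Z" "x \<in> fst T" "r \<in> fst T"
    using Z_split' is_walk_endpoints_mem[OF Z(1)] by auto
  then have "g \<in> trunk S T"
    unfolding trunk_def using Z assms(3,4) by blast
  then have nb: "g \<in> parents T r f \<union> (children T r f \<inter> trunk S T)"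
    using edge unfolding children_def by blast
  have "plen wt (ys' @ [g]) \<le> plen wt Z"
    using plen_append_Cons[of wt ys' g "f # zs"] plen_nonneg[OF tail wt] unfolding Z_split' by simp
  moreover have "f \<in> D \<inter> fst T" "g \<notin> D"
    using f \<open>f \<in> fst T\<close> Q_free by auto
  ultimately show ?thesis
    using that[OF _ _ nb Q Q_free] by blast
qed

lemma last_D_vertex_on_root_walk:
  assumes Y: "is_walk (fst T) (snd T) Y f r" "distinct Y" and "f \<in> D" "r \<notin> D"
    and wt: "\<forall>e\<in>snd T. 0 \<le> wt e"
  obtains f' g Q where "f' \<in> D \<inter> fst T" "g \<notin> D" "g \<in> parents T r f'"
    "is_walk (fst T) (snd T) Q g r" "set Q \<inter> D = {}" "plen wt Q \<le> plen wt Y"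
proof -
  have "hd Y = f" "last Y = r" "Y \<noteq> []"
    using is_walk_endpoints[OF Y(1)] by simp_all
  then have "\<exists>y\<in>set Y. y \<in> D"
    using \<open>f \<in> D\<close> hd_in_set by metis
  then obtain ys f' zs where Y_split: "Y = ys @ f' # zs" and f': "f' \<in> D" and zs: "\<forall>z\<in>set zs. z \<notin> D"
    by (rule split_list_last_propE)
  have "zs \<noteq> []"
    using Y_split \<open>last Y = r\<close> \<open>r \<notin> D\<close> f' by auto
  then obtain g zs' where zs': "zs = g # zs'"
    by (metis list.exhaust)
  with Y_split have Y_split': "Y = ys @ f' # g # zs'"
    by simp
  have head: "is_walk (fst T) (snd T) (ys @ [f']) f f'" and tail: "is_walk (fst T) (snd T) (f' # g # zs') f' r"
    using Y(1) is_walk_append_Cons_iff[of "fst T" "snd T" ys f' "g # zs'" f r] unfolding Y_split' by simp_all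
  have "distinct (f' # g # zs')"
    using Y(2) unfolding Y_split' by simp
  with tail have par: "g \<in> parents T r f'"
    unfolding parents_def by fastforce
  have Q: "is_walk (fst T) (snd T) (g # zs') g r" and "f' \<in> fst T" "wt {f', g} \<ge> 0"
    using tail wt by auto
  have "plen wt (g # zs') \<le> plen wt Y"
    using plen_append_Cons[of wt ys f' "g # zs'"] plen_nonneg[OF head wt] \<open>wt {f', g} \<ge> 0\<close>
    unfolding Y_split' by simp
  moreover have "set (g # zs') \<inter> D = {}" "f' \<in> D \<inter> fst T" "g \<notin> D"
    using zs zs' f' \<open>f' \<in> fst T\<close> by auto
  ultimately show ?thesis
    using that[OF _ _ par Q] by blast
qed

lemma D_free_walk_to_D_neighbour:
  assumes Z: "is_walk (fst T) (snd T) Z x r" "distinct Z"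
    and Y: "is_walk (fst T) (snd T) Y f r" "distinct Y"
    and "x \<in> S" "r \<in> S" "x \<notin> D" "f \<in> D" and wt: "\<forall>e\<in>snd T. 0 \<le> wt e"
  obtains f' g Q where "f' \<in> D \<inter> fst T" "g \<notin> D" "g \<in> parents T r f' \<union> (children T r f' \<inter> trunk S T)"
    "is_walk (fst T) (snd T) Q x g" "set Q \<inter> D = {}" "plen wt Q \<le> plen wt Z + plen wt Y"
proof (cases "set Z \<inter> D = {}")
  case True
  have "r \<in> set Z"
    using is_walk_endpoints[OF Z(1)] last_in_set by metis
  with True have "r \<notin> D"
    by blast
  then obtain f' g Q where "f' \<in> D \<inter> fst T" "g \<notin> D" "g \<in> parents T r f'"
      and Q: "is_walk (fst T) (snd T) Q g r" "set Q \<inter> D = {}" "plen wt Q \<le> plen wt Y"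
    by (rule last_D_vertex_on_root_walk[OF Y \<open>f \<in> D\<close> _ wt])
  let ?Q = "Z @ tl (rev Q)"
  have "is_walk (fst T) (snd T) ?Q x g" "plen wt ?Q = plen wt Z + plen wt Q"
    using is_walk_append_tl[OF Z(1) is_walk_rev[OF Q(1)]] by simp_all
  moreover have "set ?Q \<inter> D = {}"
    using True Q(2) by (cases "rev Q") auto
  ultimately show ?thesis
    using that[of f' g ?Q] \<open>f' \<in> D \<inter> fst T\<close> \<open>g \<notin> D\<close> \<open>g \<in> parents T r f'\<close> Q(3) by auto
next
  case False
  then obtain f' g Q where "f' \<in> D \<inter> fst T" "g \<notin> D" "g \<in> parents T r f' \<union> (children T r f' \<inter> trunk S T)"
      "is_walk (fst T) (snd T) Q x g" "set Q \<inter> D = {}" "plen wt Q \<le> plen wt Z"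
    by (rule first_D_vertex_on_trunk_walk[OF Z \<open>x \<in> S\<close> \<open>r \<in> S\<close> \<open>x \<notin> D\<close> _ wt])
  moreover have "0 \<le> plen wt Y"
    using plen_nonneg[OF Y(1) wt] .
  ultimately show ?thesis
    using that[of f' g Q] by linarith
qed

section \<open>Tree covers and the hierarchy\<close>

lemma tree_cover_treeD:
  "tree_cover V E wt R S C \<Longrightarrow> x \<in> S \<Longrightarrow> is_tree_in (V - R) (ind E (V - R)) (C x) \<and> x \<in> fst (C x)"
  unfolding tree_cover_def Let_def by blast

lemma tree_cover_stretchD:
  assumes "tree_cover V E wt R S C" "u \<in> S" "v \<in> V - R" "gdist (V - R) (ind E (V - R)) wt u v < \<infinity>"
  obtains x where "x \<in> S" "u \<in> fst (C x)" "v \<in> fst (C x)"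
    "dep wt (C x) x u + dep wt (C x) x v
       \<le> ereal (2 * ln (real (card V)) - 1) * gdist (V - R) (ind E (V - R)) wt u v"
  using assms unfolding tree_cover_def Let_def by blast

lemma is_tree_in_subset: "is_tree_in X F T \<Longrightarrow> fst T \<subseteq> X \<and> snd T \<subseteq> F \<and> (\<forall>e\<in>snd T. e \<subseteq> fst T)"
  unfolding is_tree_in_def by simp

lemma tree_neighbours_subset:
  assumes "is_tree_in X F T"
  shows "parents T r f \<union> children T r f \<subseteq> fst T"
proof
  fix y
  assume "y \<in> parents T r f \<union> children T r f"
  then show "y \<in> fst T"
  proof
    assume "y \<in> parents T r f"
    then obtain q where q: "is_walk (fst T) (snd T) q f r" "2 \<le> length q" "q ! 1 = y"
      unfolding parents_def by blast
    then have "y \<in> set q"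
      using nth_mem[of 1 q] by simp
    then show ?thesis
      using is_walk_endpoints[OF q(1)] by blast
  next
    assume "y \<in> children T r f"
    then have "{f, y} \<in> snd T"
      unfolding children_def by simp
    then show ?thesis
      using is_tree_in_subset[OF assms] by blast
  qed
qed

lemma Hi_subset:
  assumes covers: "\<forall>R S. R \<subseteq> V \<longrightarrow> S \<subseteq> V \<longrightarrow> tree_cover V E wt R (S - R) (TC R S)"
    and "R \<subseteq> V" "S \<subseteq> V" "0 \<le> s"
  shows "Hi s TC R S \<subseteq> V"
proof
  fix v
  assume "v \<in> Hi s TC R S"
  then obtain x where x: "x \<in> S - R" "s < real (pdeg (S - R) (TC R S x) v)"
    unfolding Hi_def by blast
  with \<open>0 \<le> s\<close> have "pdeg (S - R) (TC R S x) v \<noteq> 0"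
    by auto
  then have "v \<in> trunk (S - R) (TC R S x)"
    by (metis pdeg_def)
  then have v: "v \<in> fst (TC R S x)"
    by (rule subsetD[OF trunk_subset])
  have "is_tree_in (V - R) (ind E (V - R)) (TC R S x)"
    using tree_cover_treeD[OF covers[rule_format, OF assms(2,3)] x(1)] by simp
  with v show "v \<in> V"
    unfolding is_tree_in_def by blast
qed

lemma hier_path_subset:
  assumes covers: "\<forall>R S. R \<subseteq> V \<longrightarrow> S \<subseteq> V \<longrightarrow> tree_cover V E wt R (S - R) (TC R S)"
    and hp: "hier_path s d TC V U p" and "0 \<le> s"
  shows "1 \<le> j \<Longrightarrow> j \<le> p \<Longrightarrow> U j \<subseteq> V"
proof (induction j)
  case (Suc j)
  show ?case
  proof (cases "j = 0")
    case True
    then show ?thesis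
      using hp unfolding hier_path_def by simp
  next
    case False
    with Suc.prems have "\<exists>i<d. U (Suc j) = Wc s TC (U j) i"
      using hp unfolding hier_path_def by simp
    then obtain i where "U (Suc j) = Wc s TC (U j) i"
      by blast
    moreover have "Wc s TC (U j) i \<subseteq> V" for i
      using Hi_subset[OF covers _ Suc.IH \<open>0 \<le> s\<close>] False Suc.prems by (induction i) auto
    ultimately show ?thesis
      by simp
  qed
qed simp

lemma neighbour_in_VH:
  assumes "f \<in> D" "g \<notin> D" "(i, w) \<in> tidx U p" "f \<in> fst (TC (U (Suc i)) (U i) w)"
    and "g \<in> parents (TC (U (Suc i)) (U i) w) w f
             \<union> (children (TC (U (Suc i)) (U i) w) w f \<inter> trunk (U i - U (Suc i)) (TC (U (Suc i)) (U i) w))"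
  shows "g \<in> VH TC U p D s0 t0"
proof -
  have "g \<in> NT TC U (i, w) f"
    using assms(5) unfolding NT_def Let_def by simp
  moreover have "(i, w) \<in> {ix \<in> tidx U p. f \<in> fst (TC (U (Suc (fst ix))) (U (fst ix)) (snd ix))}"
    using assms(3,4) by simp
  ultimately show ?thesis
    using assms(1,2) unfolding VH_def by blast
qed

lemma ex_max_on_interval:
  fixes f :: "nat \<Rightarrow> 'b::linorder"
  assumes "a \<le> b"
  obtains z where "a \<le> z" "z \<le> b" "\<forall>j\<in>{a..b}. f j \<le> f z"
proof -
  have "Max (f ` {a..b}) \<in> f ` {a..b}"
    using assms by (intro Max_in) auto
  then obtain z where z: "z \<in> {a..b}" "f z = Max (f ` {a..b})"
    by auto
  have "\<forall>j\<in>{a..b}. f j \<le> f z"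
    unfolding z(2) by (auto intro: Max_ge)
  with z(1) show ?thesis
    by (intro that) auto
qed

lemma is_walk_subpath_Gv:
  assumes P: "is_walk X F P u v" and "X \<subseteq> V" "F \<subseteq> E" "m \<le> n" "n < length P"
    and "\<forall>j\<in>{m..n}. lev U p (P ! j) \<le> l"
  shows "is_walk (Gv V U p l) (ind E (Gv V U p l)) (subpath P m n) (P ! m) (P ! n)"
proof -
  have "set (subpath P m n) \<subseteq> Gv V U p l"
    using assms is_walk_endpoints[OF P] nth_mem unfolding set_subpath[OF assms(5)] Gv_def by fastforce
  then show ?thesis
    using is_walk_ind[OF is_walk_subpath[OF P assms(4,5)] assms(3)] by simp
qed

(* The hierarchy path enters only through these consequences of hier_path (see hier_path_subset). *)
locale cover_hierarchy =
  fixes V :: "'a set" and E :: "'a set set" and wt :: "'a set \<Rightarrow> real"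
    and TC :: "'a set \<Rightarrow> 'a set \<Rightarrow> 'a \<Rightarrow> 'a tree" and U :: "nat \<Rightarrow> 'a set" and p :: nat
  assumes card_V: "3 \<le> card V"
    and weight_ge_1: "\<forall>e\<in>E. 1 \<le> wt e"
    and covers: "\<forall>R S. R \<subseteq> V \<longrightarrow> S \<subseteq> V \<longrightarrow> tree_cover V E wt R (S - R) (TC R S)"
    and p_pos: "1 \<le> p" and U_1: "U 1 = V" and U_Suc_p: "U (Suc p) = {}"
    and U_subset: "\<And>j. 1 \<le> j \<Longrightarrow> j \<le> p \<Longrightarrow> U j \<subseteq> V"
begin

lemma weight_nonneg: "\<forall>e\<in>ind E X. 0 \<le> wt e"
proof
  fix e
  assume "e \<in> ind E X"
  then have "1 \<le> wt e"
    using weight_ge_1 unfolding ind_def by simp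
  then show "0 \<le> wt e"
    by simp
qed

lemma ln_card_V_gt: "1 / 2 < ln (real (card V))"
proof -
  have "exp (1 / 2 :: real) < exp 1"
    by simp
  also have "\<dots> \<le> 3"
    by (rule exp_le)
  also have "\<dots> \<le> real (card V)"
    using card_V by simp
  finally show ?thesis
    using ln_less_cancel_iff[of "exp (1 / 2)" "real (card V)"] card_V by simp
qed

lemma cover_at_level:
  assumes "1 \<le> i" "i \<le> p"
  shows "tree_cover V E wt (U (Suc i)) (U i - U (Suc i)) (TC (U (Suc i)) (U i))"
proof -
  have "U (Suc i) \<subseteq> V"
    using U_subset[of "Suc i"] U_Suc_p assms by (cases "i = p") auto
  then show ?thesis
    using covers[rule_format, OF _ U_subset[OF assms]] by simp
qed

lemma lev_bounds:
  assumes "x \<in> V"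
  shows "1 \<le> lev U p x" "lev U p x \<le> p" "x \<in> U (lev U p x)"
proof -
  let ?L = "{l. 1 \<le> l \<and> l \<le> p \<and> x \<in> U l}"
  have "finite ?L" "1 \<in> ?L"
    using p_pos U_1 assms by auto
  then have "lev U p x \<in> ?L"
    unfolding lev_def by (intro Max_in) auto
  then show "1 \<le> lev U p x" "lev U p x \<le> p" "x \<in> U (lev U p x)"
    by auto
qed

lemma lev_maximal: "1 \<le> l \<Longrightarrow> l \<le> p \<Longrightarrow> x \<in> U l \<Longrightarrow> l \<le> lev U p x"
  unfolding lev_def by (rule Max_ge) auto

lemma not_in_U_Suc_lev:
  assumes "x \<in> V"
  shows "x \<notin> U (Suc (lev U p x))"
  using lev_bounds[OF assms] lev_maximal[of "Suc (lev U p x)" x] U_Suc_p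
  by (cases "lev U p x = p") auto

lemma Gv_subset:
  assumes "i \<le> p"
  shows "Gv V U p i \<subseteq> V - U (Suc i)"
proof
  fix x
  assume x: "x \<in> Gv V U p i"
  then have "x \<in> V" "lev U p x \<le> i"
    unfolding Gv_def by auto
  moreover have "x \<notin> U (Suc i)" if "Suc i \<le> p"
    using lev_maximal[of "Suc i" x] that calculation by auto
  ultimately show "x \<in> V - U (Suc i)"
    using U_Suc_p assms by (cases "i = p") auto
qed

lemma VH_subset:
  assumes "s0 \<in> V" "t0 \<in> V"
  shows "VH TC U p D s0 t0 \<subseteq> V"
proof -
  have NT_subset: "NT TC U ix f \<subseteq> V" if "ix \<in> tidx U p" for ix f
  proof -
    obtain i w where ix: "ix = (i, w)"
      by fastforce
    with that have "1 \<le> i" "i \<le> p" "w \<in> U i - U (Suc i)"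
      unfolding tidx_def by auto
    then have T: "is_tree_in (V - U (Suc i)) (ind E (V - U (Suc i))) (TC (U (Suc i)) (U i) w)"
      using tree_cover_treeD[OF cover_at_level] by simp
    have "NT TC U ix f \<subseteq> fst (TC (U (Suc i)) (U i) w)"
      using tree_neighbours_subset[OF T] unfolding ix NT_def Let_def by auto
    also have "\<dots> \<subseteq> V"
      using is_tree_in_subset[OF T] by auto
    finally show ?thesis .
  qed
  have "(\<Union>f\<in>D. \<Union>ix\<in>{ix \<in> tidx U p. f \<in> fst (TC (U (Suc (fst ix))) (U (fst ix)) (snd ix))}. NT TC U ix f) \<subseteq> V"
    by (intro UN_least) (simp add: NT_subset)
  then show ?thesis
    using assms unfolding VH_def by auto
qed

lemma tree_at_level:
  assumes "1 \<le> i" "i \<le> p" "w \<in> U i - U (Suc i)"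
  shows "fst (TC (U (Suc i)) (U i) w) \<subseteq> V - U (Suc i)" "snd (TC (U (Suc i)) (U i) w) \<subseteq> E"
  using is_tree_in_subset[OF conjunct1[OF tree_cover_treeD[OF cover_at_level[OF assms(1,2)] assms(3)]]]
  unfolding ind_def by auto

lemma tree_cover_short_root_walks:
  assumes i: "1 \<le> i" "i \<le> p" and x: "x \<in> U i - U (Suc i)"
    and q: "is_walk (V - U (Suc i)) (ind E (V - U (Suc i))) q x f"
    and r: "(2 * ln (real (card V)) - 1) * plen wt q < r"
  obtains w Z Y where "w \<in> U i - U (Suc i)"
    "is_walk (fst (TC (U (Suc i)) (U i) w)) (snd (TC (U (Suc i)) (U i) w)) Z x w" "distinct Z"
    "is_walk (fst (TC (U (Suc i)) (U i) w)) (snd (TC (U (Suc i)) (U i) w)) Y f w" "distinct Y"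
    "plen wt Z + plen wt Y < r"
proof -
  let ?R = "U (Suc i)" and ?c = "2 * ln (real (card V)) - 1"
  have gd: "gdist (V - ?R) (ind E (V - ?R)) wt x f \<le> ereal (plen wt q)"
    by (rule gdist_le_plen[OF q])
  then have fin: "gdist (V - ?R) (ind E (V - ?R)) wt x f < \<infinity>"
    using le_less_trans[OF gd, of \<infinity>] by simp
  have "f \<in> V - ?R"
    using is_walk_endpoints_mem[OF q] by simp
  then obtain w where w: "w \<in> U i - ?R"
    and dep: "dep wt (TC ?R (U i) w) w x + dep wt (TC ?R (U i) w) w f
                \<le> ereal ?c * gdist (V - ?R) (ind E (V - ?R)) wt x f"
    by (rule tree_cover_stretchD[OF cover_at_level[OF i] x _ fin])
  have "ereal ?c * gdist (V - ?R) (ind E (V - ?R)) wt x f \<le> ereal ?c * ereal (plen wt q)"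
    using gd ln_card_V_gt by (intro ereal_mult_left_mono) auto
  also have "\<dots> < ereal r"
    using r by simp
  finally have "gdist (fst (TC ?R (U i) w)) (snd (TC ?R (U i) w)) wt x w
      + gdist (fst (TC ?R (U i) w)) (snd (TC ?R (U i) w)) wt f w < ereal r"
    using dep unfolding dep_def by simp
  moreover have "\<forall>e\<in>snd (TC ?R (U i) w). 0 \<le> wt e"
    using tree_at_level(2)[OF i w] weight_ge_1 by fastforce
  ultimately show ?thesis
    using that[OF w] by (elim gdist_sum_lessE)
qed

lemma short_detour_to_VH:
  assumes i: "1 \<le> i" "i \<le> p" and x: "x \<in> U i - U (Suc i)" "x \<notin> D" and f: "f \<in> D"
    and q: "is_walk (V - U (Suc i)) (ind E (V - U (Suc i))) q x f"
    and r: "(2 * ln (real (card V)) - 1) * plen wt q < r"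
  shows "\<exists>g\<in>VH TC U p D s0 t0. gdist (V - D) (ind E (V - D)) wt x g < ereal r"
proof -
  obtain w Z Y where w: "w \<in> U i - U (Suc i)"
      and Z: "is_walk (fst (TC (U (Suc i)) (U i) w)) (snd (TC (U (Suc i)) (U i) w)) Z x w" "distinct Z"
      and Y: "is_walk (fst (TC (U (Suc i)) (U i) w)) (snd (TC (U (Suc i)) (U i) w)) Y f w" "distinct Y"
      and ZY: "plen wt Z + plen wt Y < r"
    by (rule tree_cover_short_root_walks[OF i x(1) q r])
  define T where "T = TC (U (Suc i)) (U i) w"
  note T_sub = tree_at_level[OF i w, folded T_def]
  have wt_T: "\<forall>e\<in>snd T. 0 \<le> wt e"
    using T_sub(2) weight_ge_1 by fastforce
  obtain f' g Q where f': "f' \<in> D \<inter> fst T" and g: "g \<notin> D"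
      "g \<in> parents T w f' \<union> (children T w f' \<inter> trunk (U i - U (Suc i)) T)"
    and Q: "is_walk (fst T) (snd T) Q x g" "set Q \<inter> D = {}" "plen wt Q \<le> plen wt Z + plen wt Y"
    using D_free_walk_to_D_neighbour[OF Z[folded T_def] Y[folded T_def] x(1) w x(2) f wt_T] by blast
  have "(i, w) \<in> tidx U p"
    using i w unfolding tidx_def by simp
  from neighbour_in_VH[where TC = TC and U = U and i = i and w = w,
      OF IntD1[OF f'] g(1) this IntD2[OF f', unfolded T_def] g(2)[unfolded T_def]]
  have g_VH: "g \<in> VH TC U p D s0 t0" .
  have "set Q \<subseteq> V - D"
    using is_walk_endpoints[OF Q(1)] T_sub(1) Q(2) by auto
  then have "gdist (V - D) (ind E (V - D)) wt x g \<le> ereal (plen wt Q)"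
    by (rule gdist_le_plen[OF is_walk_ind[OF Q(1) T_sub(2)]])
  also have "\<dots> < ereal r"
    using Q(3) ZY by simp
  finally show ?thesis
    using g_VH by blast
qed

lemma card_VH_pos:
  assumes "s0 \<in> V - D" "t0 \<in> V"
  shows "0 < card (VH TC U p D s0 t0)"
proof -
  have "finite V"
    using card_V card.infinite by fastforce
  then have "finite (VH TC U p D s0 t0)"
    using VH_subset[of s0 t0 D] assms finite_subset by blast
  moreover have "s0 \<in> VH TC U p D s0 t0"
    using assms(1) unfolding VH_def by simp
  ultimately show ?thesis
    using card_gt_0_iff by blast
qed

lemma far_from_VH_imp_far_from_D:
  assumes far: "far_away (V - D) (ind E (V - D)) wt (VH TC U p D s0 t0) \<epsilon> P"
    and z: "0 < z" "z < length P - 1" "P ! z \<in> U l - U (Suc l)" "P ! z \<notin> D"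
    and l: "1 \<le> l" "l \<le> p"
    and q: "is_walk (V - U (Suc l)) (ind E (V - U (Suc l))) q (P ! z) f" and f: "f \<in> D"
  shows "\<epsilon> * min (prefix_len wt P z) (suffix_len wt P z) \<le> (2 * ln (real (card V)) - 1) * plen wt q"
proof (rule ccontr)
  let ?r = "\<epsilon> * min (prefix_len wt P z) (suffix_len wt P z)"
  assume "\<not> ?r \<le> (2 * ln (real (card V)) - 1) * plen wt q"
  then obtain g where "g \<in> VH TC U p D s0 t0" "gdist (V - D) (ind E (V - D)) wt (P ! z) g < ereal ?r"
    using short_detour_to_VH[OF l z(3,4) f q] by force
  with far z(1,2) show False
    unfolding far_away_def by fastforce
qed

lemma segment_le_walk_through_D:
  assumes P: "is_walk (V - D) (ind E (V - D)) P u v"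
    and far: "far_away (V - D) (ind E (V - D)) wt (VH TC U p D s0 t0) \<epsilon> P"
    and \<eta>: "0 < \<eta>" "(4 * ln (real (card V)) - 2) * \<eta> = \<epsilon>"
    and abz: "1 \<le> a" "a \<le> z" "z \<le> b" "b < length P - 1" and seg: "same_seg wt \<eta> P a b"
    and l: "1 \<le> l" "l \<le> p" "P ! z \<in> U l - U (Suc l)"
    and head: "is_walk (V - U (Suc l)) (ind E (V - U (Suc l))) (subpath P a z) (P ! a) (P ! z)"
    and q: "is_walk (V - U (Suc l)) (ind E (V - U (Suc l))) q (P ! a) (P ! b)" and "set q \<inter> D \<noteq> {}"
  shows "plen wt (subpath P a b) \<le> plen wt q"
proof (rule ccontr)
  let ?sub = "plen wt (subpath P a b)" and ?M = "min (prefix_len wt P z) (suffix_len wt P z)"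
    and ?k = "ln (real (card V))"
  assume shorter: "\<not> ?sub \<le> plen wt q"
  have "b < length P" "z < length P" and z: "0 < z" "z < length P - 1"
    using abz by auto
  then have "P ! z \<notin> D"
    using is_walk_endpoints[OF P] nth_mem[OF \<open>z < length P\<close>] by blast
  obtain j where j: "j < length q" "q ! j \<in> D"
    using \<open>set q \<inter> D \<noteq> {}\<close> by (auto simp: in_set_conv_nth)
  let ?detour = "rev (subpath P a z) @ tl (take (Suc j) q)"
  from is_walk_append_tl[OF is_walk_rev[OF head] is_walk_take_drop(1)[OF q j(1)]]
  have detour: "is_walk (V - U (Suc l)) (ind E (V - U (Suc l))) ?detour (P ! z) (q ! j)"
    and "plen wt ?detour = plen wt (subpath P a z) + prefix_len wt q j"
    by simp_all
  moreover have "plen wt (subpath P a z) \<le> ?sub"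
    using prefix_len_subpath[of a z P wt] prefix_len_subpath[of a b P wt] prefix_len_subpath[of z b P wt]
      plen_nonneg[OF is_walk_subpath[OF P, of z b] weight_nonneg] abz(2,3) \<open>b < length P\<close> by simp
  moreover have "prefix_len wt q j \<le> plen wt q"
    using plen_take_drop[OF j(1), of wt] plen_nonneg[OF is_walk_take_drop(2)[OF q j(1)] weight_nonneg]
    by simp
  ultimately have "plen wt ?detour \<le> 2 * ?sub"
    using shorter by simp
  then have "(2 * ?k - 1) * plen wt ?detour \<le> (2 * ?k - 1) * (2 * ?sub)"
    using ln_card_V_gt by (intro mult_left_mono) auto
  also have "\<dots> = (4 * ?k - 2) * ?sub"
    by (simp add: algebra_simps)
  also have "\<dots> < (4 * ?k - 2) * (\<eta> * ?M)"
    using subpath_len_less_same_seg[OF P _ \<eta>(1) abz seg] weight_ge_1 ln_card_V_gt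
    by (intro mult_strict_left_mono) (auto simp: ind_def)
  also have "\<dots> = \<epsilon> * ?M"
    using \<eta>(2) by simp
  finally show False
    using far_from_VH_imp_far_from_D[OF far z l(3) \<open>P ! z \<notin> D\<close> l(1,2) detour j(2)] by simp
qed

lemma far_segment_shortest_in_level:
  assumes P: "is_shortest (V - D) (ind E (V - D)) wt P u v"
    and far: "far_away (V - D) (ind E (V - D)) wt (VH TC U p D s0 t0) \<epsilon> P"
    and \<eta>: "0 < \<eta>" "(4 * ln (real (card V)) - 2) * \<eta> = \<epsilon>"
    and ab: "1 \<le> a" "a \<le> b" "b < length P - 1" and seg: "same_seg wt \<eta> P a b"
  shows "\<exists>l. 1 \<le> l \<and> l \<le> p \<and>
    is_shortest (Gv V U p l) (ind E (Gv V U p l)) wt (subpath P a b) (P ! a) (P ! b)"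
proof -
  have P_walk: "is_walk (V - D) (ind E (V - D)) P u v"
    using P unfolding is_shortest_def by simp
  obtain z where z: "a \<le> z" "z \<le> b" and z_max: "\<forall>j\<in>{a..b}. lev U p (P ! j) \<le> lev U p (P ! z)"
    using ab(2) by (rule ex_max_on_interval)
  define l where "l = lev U p (P ! z)"
  have "z < length P"
    using z ab(3) by simp
  then have "P ! z \<in> V"
    using is_walk_endpoints[OF P_walk] nth_mem by blast
  then have l: "1 \<le> l" "l \<le> p" "P ! z \<in> U l - U (Suc l)"
    using lev_bounds not_in_U_Suc_lev unfolding l_def by auto
  let ?G = "Gv V U p l"
  have segment_walk: "is_walk ?G (ind E ?G) (subpath P m n) (P ! m) (P ! n)"
    if "a \<le> m" "m \<le> n" "n \<le> b" for m n
    using that z_max ab(3) unfolding l_def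
    by (intro is_walk_subpath_Gv[OF P_walk]) (auto simp: ind_def)
  have G_sub: "?G \<subseteq> V - U (Suc l)" "ind E ?G \<subseteq> ind E (V - U (Suc l))"
    using Gv_subset[OF l(2)] unfolding ind_def by auto
  have G_walk: "is_walk (V - U (Suc l)) (ind E (V - U (Suc l))) q x y"
    if "is_walk ?G (ind E ?G) q x y" for q x y
    using is_walk_mono[OF that G_sub] .
  have shortest: "plen wt (subpath P a b) \<le> plen wt q" if q: "is_walk ?G (ind E ?G) q (P ! a) (P ! b)" for q
  proof (cases "set q \<inter> D = {}")
    case True
    with is_walk_endpoints[OF q] have "set q \<subseteq> V - D"
      unfolding Gv_def by auto
    then show ?thesis
      using is_shortest_subpath_le[OF P ab(2) _ is_walk_ind[OF q]] ab(3) unfolding ind_def by auto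
  next
    case False
    with segment_le_walk_through_D[OF P_walk far \<eta> ab(1) z ab(3) seg l] show ?thesis
      using G_walk[OF segment_walk[of a z]] G_walk[OF q] z by simp
  qed
  have "is_shortest ?G (ind E ?G) wt (subpath P a b) (P ! a) (P ! b)"
    unfolding is_shortest_def
    using segment_walk[of a b] gdist_le_plen[OF segment_walk[of a b]] gdist_geI[OF shortest] ab(2)
    by (simp add: order_antisym)
  then show ?thesis
    using l by blast
qed

end

theorem theorem4p3:
  fixes V :: "'a set" and E :: "'a set set" and wt :: "'a set \<Rightarrow> real" and W :: real
    and d :: nat and c :: real and s :: real
    and TC :: "'a set \<Rightarrow> 'a set \<Rightarrow> 'a \<Rightarrow> 'a tree"
    and U :: "nat \<Rightarrow> 'a set" and p :: nat and D :: "'a set" and s0 t0 u v :: 'a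
    and \<epsilon> \<epsilon>3 \<epsilon>4 :: real and P :: "'a list"
  defines "k \<equiv> ln (real (card V))"
  defines "s \<equiv> 4 * exp 1 * real d powr (c + 1) * (ln (real (card V)))\<^sup>2 + 1"
  defines "H \<equiv> VH TC U p D s0 t0"
  defines "\<epsilon>3 \<equiv> \<epsilon> / (2 * real (card H))"
  defines "\<epsilon>4 \<equiv> \<epsilon>3 / (4 * k - 2)"
  assumes graph: "weighted_graph V E wt W"
    and uniq: "unique_shortest V E wt"
    and d2: "d \<ge> 2" and c1: "c \<ge> 1"
    and covers: "\<forall>R S. R \<subseteq> V \<longrightarrow> S \<subseteq> V \<longrightarrow> tree_cover V E wt R (S - R) (TC R S)"
    and hp: "hier_path s d TC V U p" and Up: "U (Suc p) = {}"
    and D: "D \<subseteq> V" "card D \<le> d"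
    and Dlow: "\<forall>f\<in>D. \<forall>ix\<in>tidx U p.
        real (pdeg (U (fst ix) - U (Suc (fst ix))) (TC (U (Suc (fst ix))) (U (fst ix)) (snd ix)) f) \<le> s"
    and q: "s0 \<in> V - D" "t0 \<in> V - D"
    and eps: "0 < \<epsilon>" "\<epsilon> < 1"
    and uv: "u \<in> H" "v \<in> H"
    and P: "is_shortest (V - D) (ind E (V - D)) wt P u v"
    and farP: "far_away (V - D) (ind E (V - D)) wt H \<epsilon>3 P"
  shows "seg_expath V E wt U p \<epsilon>4 P"
proof -
  have card_V: "3 \<le> card V" and weights: "\<forall>e\<in>E. 1 \<le> wt e"
    using graph by (simp_all add: weighted_graph_def)
  have "0 \<le> s"
    unfolding s_def by (intro add_nonneg_nonneg mult_nonneg_nonneg) auto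
  have "1 \<le> p" "U 1 = V"
    using hp by (simp_all add: hier_path_def)
  interpret cover_hierarchy V E wt TC U p
    by (rule cover_hierarchy.intro[OF card_V weights covers \<open>1 \<le> p\<close> \<open>U 1 = V\<close> Up
          hier_path_subset[OF covers hp \<open>0 \<le> s\<close>]])
  have "0 < \<epsilon>3" "0 < 4 * k - 2"
    using card_VH_pos[of s0 D t0] q eps ln_card_V_gt unfolding \<epsilon>3_def H_def k_def by simp_all
  then have \<epsilon>4: "0 < \<epsilon>4" "(4 * ln (real (card V)) - 2) * \<epsilon>4 = \<epsilon>3"
    unfolding \<epsilon>4_def k_def by simp_all
  show ?thesis
    unfolding seg_expath_def Let_def
  proof (intro allI impI)
    fix i
    assume "1 \<le> i \<and> i < length P - 1"
    then show "\<exists>l. 1 \<le> l \<and> l \<le> p \<and> is_shortest (Gv V U p l) (ind E (Gv V U p l)) wt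
        (subpath P (Min (seg_class wt \<epsilon>4 P i)) (Max (seg_class wt \<epsilon>4 P i)))
        (P ! Min (seg_class wt \<epsilon>4 P i)) (P ! Max (seg_class wt \<epsilon>4 P i))"
      using far_segment_shortest_in_level[OF P farP[unfolded H_def] \<epsilon>4 seg_class_bounds] by blast
  qed
qed

end
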